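(* Let $\mu,h\ge2$ be integers. Put $X=\{0,1\}$, $n=h(h-1)\mu+1$, $A^*=\{x\in\mathbb{Z}_{\ge0}: x\bmod n\in\{\mu,h\mu\}\}$ and $A=A^*\cup X$. Then $\mu(A,X)=\mu$, $A^*=A\setminus X$ is an asymptotic basis with $G(A\setminus X)=h(h-1)\mu$, and $A$ is an asymptotic basis with $G(A)\le 2h+\mu-4$.
   Context: A set $A\subseteq\mathbb{Z}$ with $|A\cap\mathbb{Z}_{<0}|<\infty$ is an asymptotic basis if for some positive integer $h$ the $h$-fold sumset $hA=\{a_1+\dots+a_h: a_i\in A\}$ contains all but finitely many non-negative integers; the least such $h$ is the order $G(A)$. For a finite set $Y$ of integers, $\mathrm{diam}(Y)=\max Y-\min Y$, and for $X\subseteq A$ finite, $\mu(A,X)=\min_{y\in A\setminus X}\mathrm{diam}(X\cup\{y\})$. *)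

theory Defs
  imports Main
begin

definition sumset :: "nat \<Rightarrow> int set \<Rightarrow> int set" where
  "sumset h A = {sum_list xs | xs. length xs = h \<and> set xs \<subseteq> A}"

definition basis_of_order :: "int set \<Rightarrow> nat \<Rightarrow> bool" where
  "basis_of_order A h \<longleftrightarrow> 0 < h \<and> finite {m::int. 0 \<le> m \<and> m \<notin> sumset h A}"

definition asymptotic_basis :: "int set \<Rightarrow> bool" where
  "asymptotic_basis A \<longleftrightarrow> finite {a \<in> A. a < 0} \<and> (\<exists>h. basis_of_order A h)"

definition order_G :: "int set \<Rightarrow> nat" where
  "order_G A = (LEAST h. basis_of_order A h)"

definition diam :: "int set \<Rightarrow> int" where
  "diam Y = Max Y - Min Y"

definition mu_AX :: "int set \<Rightarrow> int set \<Rightarrow> int" where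
  "mu_AX A X = (LEAST d. \<exists>y \<in> A - X. d = diam (X \<union> {y}))"

end

theory Submission
  imports Defs
begin

text \<open>
  Since \<open>A*\<close> meets only two residue classes, a sum of \<open>k\<close> elements of \<open>A*\<close> is congruent to
  one of the \<open>k + 1\<close> values \<open>i\<mu> + (k-i)h\<mu>\<close>; so \<open>kA*\<close> misses a whole residue class
  (hence infinitely many integers) unless \<open>k + 1 \<ge> n\<close>, i.e. \<open>G(A*) \<ge> H\<close>.  Conversely
  \<open>i\<mu> + (H-i)h\<mu> = Hh\<mu> - i(h-1)\<mu>\<close>, and \<open>(h-1)\<mu>\<close> is invertible modulo \<open>n = h\<cdot>(h-1)\<mu> + 1\<close>,
  so these \<open>H + 1\<close> sums hit every residue; as \<open>A*\<close> is closed under adding \<open>n\<close>, every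
  large integer lies in \<open>HA*\<close>.  For \<open>A\<close>, every residue \<open>r\<close> is \<open>a\<mu> + bh\<mu> + t\<close> with
  \<open>a + b \<ge> 1\<close> and \<open>a + b + t \<le> 2h + \<mu> - 4\<close> (write \<open>r\<close> in the mixed radix \<open>\<mu>, h\<mu>\<close>; the
  residues below \<open>\<mu>\<close> need one wrap-around by \<open>n\<close>), the \<open>t\<close> ones come from \<open>1 \<in> A\<close> and the
  remaining summands are \<open>0\<close>.  Finally, the least element of \<open>A*\<close> is \<open>\<mu>\<close>, giving \<open>\<mu>(A,{0,1}) = \<mu>\<close>.
\<close>

lemma sumset_replicate: "a \<in> B \<Longrightarrow> int k * a \<in> sumset k B"
  unfolding sumset_def
  by (intro CollectI exI[of _ "replicate k a"]) (auto simp: sum_list_replicate)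

lemma sumset_add:
  assumes "x \<in> sumset k B" and "y \<in> sumset l B"
  shows "x + y \<in> sumset (k + l) B"
proof -
  obtain xs ys where "x = sum_list xs" "length xs = k" "set xs \<subseteq> B"
    and "y = sum_list ys" "length ys = l" "set ys \<subseteq> B"
    using assms unfolding sumset_def by blast
  then show ?thesis
    unfolding sumset_def by (intro CollectI exI[of _ "xs @ ys"]) auto
qed

lemma sumset_mono: "B \<subseteq> C \<Longrightarrow> sumset k B \<subseteq> sumset k C"
  unfolding sumset_def by blast

lemma sumset_pad_zero:
  assumes "0 \<in> B" and "x \<in> sumset k B" and "k \<le> l"
  shows "x \<in> sumset l B"
  using sumset_add[OF assms(2) sumset_replicate[OF assms(1), of "l - k"]] assms(3) by simp

lemma sumset_translate:
  assumes closed: "\<forall>x\<in>B. x + d \<in> B" and x: "x \<in> sumset k B" and "0 < k"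
  shows "x + int c * d \<in> sumset k B"
proof -
  have closed_c: "y + int c * d \<in> B" if "y \<in> B" for y
  proof (induction c)
    case (Suc c)
    then have "(y + int c * d) + d \<in> B" using closed by blast
    then show ?case by (simp add: algebra_simps)
  qed (use that in simp)
  obtain xs where xs: "x = sum_list xs" "length xs = k" "set xs \<subseteq> B"
    using x unfolding sumset_def by blast
  then obtain y ys where "xs = y # ys"
    using \<open>0 < k\<close> by (cases xs) auto
  then show ?thesis
    unfolding sumset_def
    using xs by (intro CollectI exI[of _ "(y + int c * d) # ys"]) (auto simp: closed_c)
qed

lemma sum_list_two_residues:
  fixes N p q :: int
  assumes "\<forall>x\<in>set xs. x mod N = p \<or> x mod N = q"
  shows "\<exists>i j. i + j = length xs \<and> sum_list xs mod N = (int i * p + int j * q) mod N"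
  using assms
proof (induction xs)
  case Nil
  then show ?case by simp
next
  case (Cons x xs)
  then obtain i j where ij: "i + j = length xs"
      "sum_list xs mod N = (int i * p + int j * q) mod N" by auto
  have "sum_list (x # xs) mod N = (x mod N + sum_list xs mod N) mod N"
    by (simp add: mod_add_eq)
  also have "\<dots> = (x mod N + (int i * p + int j * q)) mod N"
    by (simp only: ij(2) mod_add_right_eq)
  finally have step: "sum_list (x # xs) mod N = (x mod N + (int i * p + int j * q)) mod N" .
  from Cons.prems have "x mod N = p \<or> x mod N = q" by simp
  then show ?case
  proof
    assume "x mod N = p"
    then show ?case using ij(1) step
      by (intro exI[of _ "Suc i"] exI[of _ j]) (simp add: algebra_simps)
  next
    assume "x mod N = q"
    then show ?case using ij(1) step
      by (intro exI[of _ i] exI[of _ "Suc j"]) (simp add: algebra_simps)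
  qed
qed

lemma infinite_missing_if_residue_avoided:
  fixes S :: "int set" and N d :: int
  assumes "0 < N" and "0 \<le> d" and avoid: "\<forall>s\<in>S. s mod N \<noteq> d mod N"
  shows "infinite {m. 0 \<le> m \<and> m \<notin> S}"
proof -
  define e where "e j = d + N * int j" for j
  have "inj e"
    unfolding e_def inj_def using \<open>0 < N\<close> by simp
  then have "infinite (range e)"
    using finite_imageD infinite_UNIV_nat by blast
  moreover have "range e \<subseteq> {m. 0 \<le> m \<and> m \<notin> S}"
    using assms unfolding e_def by auto
  ultimately show ?thesis
    using finite_subset by blast
qed

lemma basis_of_order_by_residues:
  fixes C :: "int set" and N M :: int
  assumes "0 < k" and "0 < N"
    and cover: "\<And>r. 0 \<le> r \<Longrightarrow> r < N \<Longrightarrow>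
      \<exists>s\<le>M. s mod N = r \<and> (\<forall>q::nat. s + int q * N \<in> sumset k C)"
  shows "basis_of_order C k"
proof -
  have covered: "m \<in> sumset k C" if "M \<le> m" for m
  proof -
    obtain s where s: "s \<le> M" "s mod N = m mod N"
      and shifts: "\<forall>q::nat. s + int q * N \<in> sumset k C"
      using cover[of "m mod N"] \<open>0 < N\<close> by auto
    obtain q where q: "m - s = N * q"
      using s(2) by (metis mod_eq_dvd_iff dvd_def)
    have "0 \<le> N * q"
      using q s(1) \<open>M \<le> m\<close> by linarith
    then have "0 \<le> q"
      using \<open>0 < N\<close> by (simp add: zero_le_mult_iff)
    then have "m = s + int (nat q) * N"
      using q by (simp add: algebra_simps)
    then show ?thesis
      using shifts by metis
  qed
  have "{m. 0 \<le> m \<and> m \<notin> sumset k C} \<subseteq> {0..M}"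
  proof
    fix m assume "m \<in> {m. 0 \<le> m \<and> m \<notin> sumset k C}"
    then have "0 \<le> m" "\<not> M \<le> m"
      using covered by auto
    then show "m \<in> {0..M}" by simp
  qed
  then show ?thesis
    unfolding basis_of_order_def using \<open>0 < k\<close> finite_subset by blast
qed

text \<open>If \<open>B\<close> meets only two residue classes modulo \<open>N\<close>, it cannot be a basis of order \<open>k\<close>
  with \<open>k + 1 < N\<close>: \<open>kB\<close> meets at most \<open>k + 1\<close> residue classes.\<close>

lemma two_residue_order_bound:
  fixes B :: "int set" and N p q :: int
  assumes res: "\<forall>x\<in>B. x mod N = p \<or> x mod N = q" and "0 < N"
    and basis: "basis_of_order B k"
  shows "N \<le> int k + 1"
proof (rule ccontr)
  assume "\<not> N \<le> int k + 1"
  define R where "R = (\<lambda>i. (int i * p + int (k - i) * q) mod N) ` {0..k}"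
  have "card R \<le> k + 1"
    unfolding R_def using card_image_le[of "{0..k}"] by simp
  then have "card R < card {0..<N}"
    using \<open>\<not> N \<le> int k + 1\<close> by simp
  moreover have "finite R"
    unfolding R_def by simp
  ultimately have "\<not> {0..<N} \<subseteq> R"
    using card_mono[of R "{0..<N}"] by linarith
  then obtain d where d: "0 \<le> d" "d < N" "d \<notin> R"
    by (auto simp: subset_iff)
  have "s mod N \<noteq> d mod N" if "s \<in> sumset k B" for s
  proof
    assume "s mod N = d mod N"
    obtain xs where xs: "s = sum_list xs" "length xs = k" "set xs \<subseteq> B"
      using \<open>s \<in> sumset k B\<close> unfolding sumset_def by blast
    then obtain i j where "i + j = k" "s mod N = (int i * p + int j * q) mod N"
      using sum_list_two_residues[of xs N p q] res by auto
    then have "d \<in> R"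
      using \<open>s mod N = d mod N\<close> d unfolding R_def by (auto intro!: image_eqI[of _ _ i])
    with d(3) show False by contradiction
  qed
  then have "infinite {m. 0 \<le> m \<and> m \<notin> sumset k B}"
    using infinite_missing_if_residue_avoided[OF \<open>0 < N\<close> d(1)] by blast
  with basis show False
    unfolding basis_of_order_def by blast
qed

text \<open>If \<open>q - p\<close> is invertible modulo \<open>H + 1\<close>, the \<open>H + 1\<close> sums \<open>ip + (H-i)q\<close> are pairwise
  incongruent, hence represent every residue class.\<close>

lemma two_term_sums_cover_residues:
  fixes p q :: int and H :: nat
  assumes cop: "coprime (int H + 1) (q - p)"
  shows "(\<lambda>i. (int i * p + int (H - i) * q) mod (int H + 1)) ` {0..H} = {0..<int H + 1}"
    (is "?f ` _ = _")
proof (rule card_subset_eq)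
  have expand: "int i * p + int (H - i) * q = int H * q - int i * (q - p)" if "i \<le> H" for i
    using that by (simp add: of_nat_diff algebra_simps)
  have "inj_on ?f {0..H}"
  proof (rule inj_onI)
    fix i j assume i: "i \<in> {0..H}" and j: "j \<in> {0..H}" and "?f i = ?f j"
    have "i \<le> H" "j \<le> H"
      using i j by auto
    then have "(int H * q - int i * (q - p)) mod (int H + 1)
        = (int H * q - int j * (q - p)) mod (int H + 1)"
      using \<open>?f i = ?f j\<close> by (simp only: expand)
    then have "int H + 1 dvd (int j - int i) * (q - p)"
      by (simp add: mod_eq_dvd_iff algebra_simps)
    then have dvd: "int H + 1 dvd int j - int i"
      using cop by (simp add: coprime_dvd_mult_left_iff)
    have "\<bar>int j - int i\<bar> < int H + 1"
      using i j by auto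
    then show "i = j"
      using dvd dvd_imp_le_int[of "int j - int i" "int H + 1"] by fastforce
  qed
  then show "card (?f ` {0..H}) = card {0..<int H + 1}"
    by (simp only: card_image) simp
  show "?f ` {0..H} \<subseteq> {0..<int H + 1}"
    by (intro image_subsetI atLeastLessThan_iff[THEN iffD2] conjI pos_mod_sign pos_mod_bound)
      simp_all
qed simp

lemma asymptotic_basis_if_nonneg:
  assumes "\<forall>a\<in>B. 0 \<le> a" and "basis_of_order B k"
  shows "asymptotic_basis B \<and> order_G B \<le> k"
proof -
  have "{a \<in> B. a < 0} = {}"
    using assms(1) by force
  then show ?thesis
    using assms(2) unfolding asymptotic_basis_def order_G_def
    by (metis Least_le finite.emptyI)
qed

lemma diam_01_insert: "(y::int) \<ge> 1 \<Longrightarrow> diam ({0, 1} \<union> {y}) = y"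
  unfolding diam_def by (simp add: insert_commute max_def min_def)

text \<open>Digits in the mixed radix \<open>\<mu>, h\<mu>\<close>: every \<open>\<mu> \<le> r \<le> h(h-1)\<mu>\<close> is \<open>a\<mu> + bh\<mu> + t\<close>
  with \<open>t < \<mu>\<close> and \<open>1 \<le> a + b \<le> 2h - 3\<close> (\<open>a < h\<close>, \<open>b < h\<close>, and \<open>b = h - 1\<close> forces \<open>a = 0\<close>).\<close>

lemma mixed_radix_representation:
  fixes \<mu> h r :: nat
  assumes "0 < \<mu>" and "\<mu> \<le> r" and "r \<le> h * (h - 1) * \<mu>"
  shows "\<exists>a b t. r = a * \<mu> + b * (h * \<mu>) + t \<and> 1 \<le> a + b \<and> a + b \<le> 2 * h - 3 \<and> t < \<mu>"
proof -
  define q where "q = r div \<mu>"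
  define a where "a = q mod h"
  define b where "b = q div h"
  have q: "q = b * h + a"
    unfolding a_def b_def by simp
  have r: "r = a * \<mu> + b * (h * \<mu>) + r mod \<mu>"
  proof -
    have "r = q * \<mu> + r mod \<mu>"
      unfolding q_def by simp
    then show ?thesis
      using q by (simp add: algebra_simps)
  qed
  have "q * \<mu> \<le> h * (h - 1) * \<mu>"
    using r assms(3) q by (simp add: algebra_simps)
  then have q_le: "q \<le> h * (h - 1)"
    using assms(1) by (simp only: mult_le_cancel2)
  have "1 \<le> q"
    unfolding q_def using assms(1,2) div_le_mono[of \<mu> r \<mu>] by simp
  then have "0 < h"
    using q_le by (cases h) auto
  have b_le: "b \<le> h - 1"
    unfolding b_def using div_le_mono[OF q_le, of h] \<open>0 < h\<close> by simp
  have a_le: "a \<le> h - 1"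
    unfolding a_def using \<open>0 < h\<close> mod_less_divisor[of h q] by linarith
  have "a + b \<le> 2 * h - 3"
  proof (cases "b = h - 1")
    case True
    then have "a = 0"
      using q q_le by (simp add: mult.commute)
    then show ?thesis
      using True \<open>1 \<le> q\<close> q by simp
  next
    case False
    then show ?thesis
      using a_le b_le by linarith
  qed
  moreover have "1 \<le> a + b"
    using \<open>1 \<le> q\<close> q by (cases "a + b = 0") auto
  moreover have "r mod \<mu> < \<mu>"
    using assms(1) by simp
  ultimately show ?thesis
    using r by blast
qed

locale two_residue_construction =
  fixes \<mu> h :: nat
  assumes mu_ge_2: "2 \<le> \<mu>" and h_ge_2: "2 \<le> h"
begin

definition modulus :: int where
  "modulus = int (h * (h - 1) * \<mu>) + 1"

definition Astar_set :: "int set" where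
  "Astar_set = {x. 0 \<le> x \<and> x mod modulus \<in> {int \<mu>, int (h * \<mu>)}}"

text \<open>The two generators \<open>\<mu> \<le> h\<mu>\<close> are at most \<open>H\<close>, hence reduced modulo \<open>n\<close>.\<close>

lemma generators_ordered: "int \<mu> \<le> int (h * \<mu>)" "int (h * \<mu>) \<le> int (h * (h - 1) * \<mu>)"
proof -
  have "1 * \<mu> \<le> h * \<mu>"
    using h_ge_2 by (intro mult_le_mono1) simp
  then show "int \<mu> \<le> int (h * \<mu>)"
    by (simp only: of_nat_le_iff mult_1)
  have "1 * (h * \<mu>) \<le> (h - 1) * (h * \<mu>)"
    using h_ge_2 by (intro mult_le_mono1) simp
  moreover have "(h - 1) * (h * \<mu>) = h * (h - 1) * \<mu>"
    by (simp add: mult_ac)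
  ultimately show "int (h * \<mu>) \<le> int (h * (h - 1) * \<mu>)"
    by (simp only: of_nat_le_iff mult_1)
qed

lemma residues_below_modulus: "int \<mu> < modulus" "int (h * \<mu>) < modulus"
  using generators_ordered unfolding modulus_def by linarith+

lemma modulus_pos: "0 < modulus"
  using residues_below_modulus by simp

lemma Astar_residues: "\<forall>x\<in>Astar_set. x mod modulus = int \<mu> \<or> x mod modulus = int (h * \<mu>)"
  unfolding Astar_set_def by auto

lemma Astar_periodic: "\<forall>x\<in>Astar_set. x + modulus \<in> Astar_set"
  unfolding Astar_set_def using modulus_pos by auto

lemma generators_in_Astar: "int \<mu> \<in> Astar_set" "int (h * \<mu>) \<in> Astar_set"
  using residues_below_modulus unfolding Astar_set_def by simp_all

lemma Astar_ge_mu: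
  assumes "x \<in> Astar_set"
  shows "int \<mu> \<le> x"
proof -
  have "x mod modulus \<le> x"
    using assms unfolding Astar_set_def by (simp add: zmod_le_nonneg_dividend)
  moreover have "int \<mu> \<le> x mod modulus"
    using Astar_residues assms generators_ordered by auto
  ultimately show ?thesis by simp
qed

text \<open>Neither \<open>0\<close> nor \<open>1\<close> lies in \<open>A*\<close>.\<close>

lemma Astar_eq_diff: "Astar_set = (Astar_set \<union> {0, 1}) - {0, 1}"
  using Astar_ge_mu mu_ge_2 by force

lemma mu_AX_eq: "mu_AX (Astar_set \<union> {0, 1}) {0, 1} = int \<mu>"
  unfolding mu_AX_def
proof (rule Least_equality)
  show "\<exists>y\<in>(Astar_set \<union> {0, 1}) - {0, 1}. int \<mu> = diam ({0, 1} \<union> {y})"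
    using generators_in_Astar(1) Astar_eq_diff diam_01_insert[of "int \<mu>"] mu_ge_2 by force
next
  fix d assume "\<exists>y\<in>(Astar_set \<union> {0, 1}) - {0, 1}. d = diam ({0, 1} \<union> {y})"
  then obtain y where "y \<in> Astar_set" "d = diam ({0, 1} \<union> {y})"
    using Astar_eq_diff by blast
  then show "int \<mu> \<le> d"
    using Astar_ge_mu[of y] diam_01_insert[of y] mu_ge_2 by simp
qed

lemma Astar_combination_shifts:
  assumes "0 < a + b"
  shows "int a * int \<mu> + int b * int (h * \<mu>) + int q * modulus \<in> sumset (a + b) Astar_set"
  using sumset_translate[OF Astar_periodic sumset_add[OF
      sumset_replicate[OF generators_in_Astar(1)] sumset_replicate[OF generators_in_Astar(2)]] assms] .

text \<open>The gap \<open>(h-1)\<mu>\<close> between the generators is a unit modulo \<open>n\<close>, since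
  \<open>n - h\<cdot>(h-1)\<mu> = 1\<close>.\<close>

lemma modulus_coprime_gap: "coprime modulus (int (h * \<mu>) - int \<mu>)"
proof (rule coprimeI)
  fix d assume "d dvd modulus" "d dvd int (h * \<mu>) - int \<mu>"
  then have "d dvd modulus - int h * (int (h * \<mu>) - int \<mu>)"
    by simp
  moreover have "modulus - int h * (int (h * \<mu>) - int \<mu>) = 1"
    unfolding modulus_def using h_ge_2 by (simp add: of_nat_diff algebra_simps)
  ultimately show "is_unit d"
    by simp
qed

lemma order_pos: "0 < h * (h - 1) * \<mu>"
  using generators_ordered mu_ge_2 h_ge_2 by simp

lemma Astar_basis: "basis_of_order Astar_set (h * (h - 1) * \<mu>)"
proof (rule basis_of_order_by_residues[OF order_pos modulus_pos])
  define H where "H = h * (h - 1) * \<mu>"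
  fix r assume r: "0 \<le> r" "r < modulus"
  have "modulus = int H + 1"
    unfolding H_def modulus_def ..
  then have "r \<in> (\<lambda>i. (int i * int \<mu> + int (H - i) * int (h * \<mu>)) mod modulus) ` {0..H}"
    using two_term_sums_cover_residues[where p = "int \<mu>" and q = "int (h * \<mu>)" and H = H] modulus_coprime_gap r
    by simp
  then obtain i where i: "i \<in> {0..H}"
      and residue: "r = (int i * int \<mu> + int (H - i) * int (h * \<mu>)) mod modulus"
    by (rule imageE)
  define s where "s = int i * int \<mu> + int (H - i) * int (h * \<mu>)"
  have "int i * int \<mu> \<le> int i * int (h * \<mu>)"
    using generators_ordered(1) by (simp add: mult_left_mono)
  then have "s \<le> int H * int (h * \<mu>)"
    unfolding s_def using i by (simp add: algebra_simps)
  moreover have "\<forall>q::nat. s + int q * modulus \<in> sumset H Astar_set"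
  proof -
    have "i + (H - i) = H" and "0 < H"
      using i order_pos unfolding H_def by auto
    then show ?thesis
      using Astar_combination_shifts[of i "H - i"] unfolding s_def by simp
  qed
  ultimately show "\<exists>s\<le>int H * int (h * \<mu>). s mod modulus = r \<and>
      (\<forall>q::nat. s + int q * modulus \<in> sumset H Astar_set)"
    using residue unfolding s_def by blast
qed

lemma Astar_order: "order_G Astar_set = h * (h - 1) * \<mu>"
  unfolding order_G_def
proof (rule Least_equality)
  show "basis_of_order Astar_set (h * (h - 1) * \<mu>)"
    by (rule Astar_basis)
  fix k assume "basis_of_order Astar_set k"
  then have "modulus \<le> int k + 1"
    using two_residue_order_bound[OF Astar_residues modulus_pos] by blast
  then have "int (h * (h - 1) * \<mu>) \<le> int k"
    unfolding modulus_def by linarith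
  then show "h * (h - 1) * \<mu> \<le> k"
    by (simp only: of_nat_le_iff)
qed

text \<open>Every residue modulo \<open>n\<close> is represented by \<open>a\<mu> + bh\<mu> + t\<close> with \<open>a + b \<ge> 1\<close> and
  \<open>a + b + t \<le> 2h + \<mu> - 4\<close>; below \<open>\<mu>\<close> we add \<open>(h-1)h\<mu> = n - 1\<close>.\<close>

lemma residue_small_representation:
  assumes "0 \<le> r" and "r < modulus"
  shows "\<exists>a b t. 0 < a + b \<and> a + b + t \<le> 2 * h + \<mu> - 4
    \<and> int (a * \<mu> + b * (h * \<mu>) + t) mod modulus = r"
proof -
  define H where "H = h * (h - 1) * \<mu>"
  obtain m where m: "r = int m" "m \<le> H"
    using assms unfolding modulus_def H_def by (metis nonneg_int_cases of_nat_le_iff zle_add1_eq_le)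
  have wrap: "(h - 1) * (h * \<mu>) = H"
    unfolding H_def by (simp add: mult_ac)
  have mod_wrap: "(int c + modulus) mod modulus = int c" if "c \<le> H" for c
  proof -
    have "int c < modulus"
      using that unfolding modulus_def H_def by linarith
    then show ?thesis
      by simp
  qed
  consider "\<mu> \<le> m" | "m < \<mu> - 1" | "m = \<mu> - 1"
    by linarith
  then show ?thesis
  proof cases
    case 1
    then obtain a b t where "m = a * \<mu> + b * (h * \<mu>) + t" "1 \<le> a + b" "a + b \<le> 2 * h - 3" "t < \<mu>"
      using mixed_radix_representation[of \<mu> m h] m mu_ge_2 unfolding H_def by auto
    moreover have "int m mod modulus = int m"
      using assms m(1) by simp
    ultimately show ?thesis
      using m h_ge_2 by (intro exI[of _ a] exI[of _ b] exI[of _ t]) auto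
  next
    case 2
    have "int (0 * \<mu> + (h - 1) * (h * \<mu>) + (m + 1)) = int m + modulus"
      using wrap unfolding modulus_def H_def by simp
    then have "int (0 * \<mu> + (h - 1) * (h * \<mu>) + (m + 1)) mod modulus = r"
      using mod_wrap[OF m(2)] m(1) by (simp only:)
    moreover have "0 < 0 + (h - 1)" "0 + (h - 1) + (m + 1) \<le> 2 * h + \<mu> - 4"
      using 2 h_ge_2 by linarith+
    ultimately show ?thesis
      by blast
  next
    case 3
    have "int (1 * \<mu> + (h - 1) * (h * \<mu>) + 0) = int m + modulus"
      using 3 wrap mu_ge_2 unfolding modulus_def H_def by simp
    then have "int (1 * \<mu> + (h - 1) * (h * \<mu>) + 0) mod modulus = r"
      using mod_wrap[OF m(2)] m(1) by (simp only:)
    moreover have "0 < 1 + (h - 1)" "1 + (h - 1) + 0 \<le> 2 * h + \<mu> - 4"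
      using 3 h_ge_2 mu_ge_2 by linarith+
    ultimately show ?thesis
      by blast
  qed
qed

text \<open>\<open>A\<close> is a basis of order \<open>2h + \<mu> - 4\<close>: the \<open>a + b\<close> summands from \<open>A*\<close> absorb the
  translate, \<open>t\<close> summands equal \<open>1\<close>, the rest equal \<open>0\<close>.\<close>

lemma A_basis: "basis_of_order (Astar_set \<union> {0, 1}) (2 * h + \<mu> - 4)"
proof (rule basis_of_order_by_residues[OF _ modulus_pos])
  define K where "K = 2 * h + \<mu> - 4"
  show "0 < 2 * h + \<mu> - 4"
    using h_ge_2 mu_ge_2 by simp
  fix r :: int assume r: "0 \<le> r" "r < modulus"
  obtain a b t where ab: "0 < a + b" and abt: "a + b + t \<le> K"
      and residue: "int (a * \<mu> + b * (h * \<mu>) + t) mod modulus = r"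
    using residue_small_representation[OF r] unfolding K_def by auto
  define s where "s = a * \<mu> + b * (h * \<mu>) + t"
  have "a * \<mu> \<le> a * (h * \<mu>)" and "t \<le> t * (h * \<mu>)"
    using h_ge_2 mu_ge_2 by simp_all
  then have "s \<le> a * (h * \<mu>) + b * (h * \<mu>) + t * (h * \<mu>)"
    unfolding s_def by linarith
  also have "\<dots> = (a + b + t) * (h * \<mu>)"
    by (simp add: algebra_simps)
  also have "\<dots> \<le> K * (h * \<mu>)"
    using abt by (rule mult_right_mono) simp
  finally have bound: "int s \<le> int (K * (h * \<mu>))"
    by (simp only: of_nat_le_iff)
  have "int s + int q * modulus \<in> sumset K (Astar_set \<union> {0, 1})" for q
  proof -
    have "int a * int \<mu> + int b * int (h * \<mu>) + int q * modulus \<in> sumset (a + b) (Astar_set \<union> {0, 1})"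
      using Astar_combination_shifts[OF ab] sumset_mono[of Astar_set] by blast
    moreover have "int t * 1 \<in> sumset t (Astar_set \<union> {0, 1})"
      by (rule sumset_replicate) simp
    ultimately have "(int a * int \<mu> + int b * int (h * \<mu>) + int q * modulus) + int t * 1
        \<in> sumset (a + b + t) (Astar_set \<union> {0, 1})"
      by (rule sumset_add)
    moreover have "(int a * int \<mu> + int b * int (h * \<mu>) + int q * modulus) + int t * 1
        = int s + int q * modulus"
      unfolding s_def by simp
    ultimately have "int s + int q * modulus \<in> sumset (a + b + t) (Astar_set \<union> {0, 1})"
      by (simp only:)
    then show ?thesis
      by (rule sumset_pad_zero[rotated, OF _ abt]) simp
  qed
  then show "\<exists>s\<le>int (K * (h * \<mu>)). s mod modulus = r \<and>
      (\<forall>q::nat. s + int q * modulus \<in> sumset (2 * h + \<mu> - 4) (Astar_set \<union> {0, 1}))"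
    using bound residue unfolding K_def by (intro exI[of _ "int s"]) (simp add: s_def)
qed

end

theorem mainTheorem8:
  fixes \<mu> h :: nat
  assumes "\<mu> \<ge> 2" and "h \<ge> 2"
  defines "n \<equiv> h * (h - 1) * \<mu> + 1"
  defines "Astar \<equiv> {x::int. 0 \<le> x \<and> x mod int n \<in> {int \<mu>, int (h * \<mu>)}}"
  defines "A \<equiv> Astar \<union> {0, 1}"
  shows "mu_AX A {0, 1} = int \<mu>
    \<and> Astar = A - {0, 1}
    \<and> asymptotic_basis (A - {0, 1})
    \<and> order_G (A - {0, 1}) = h * (h - 1) * \<mu>
    \<and> asymptotic_basis A
    \<and> order_G A \<le> 2 * h + \<mu> - 4"
proof -
  interpret two_residue_construction \<mu> h
    using assms by unfold_locales
  have "int n = modulus"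
    unfolding n_def modulus_def by simp
  then have Astar: "Astar = Astar_set"
    unfolding Astar_def Astar_set_def by simp
  have A: "A = Astar_set \<union> {0, 1}"
    unfolding A_def Astar ..
  have "\<forall>a\<in>A. 0 \<le> a"
    unfolding A Astar_set_def by auto
  then have "asymptotic_basis A \<and> order_G A \<le> 2 * h + \<mu> - 4"
    using asymptotic_basis_if_nonneg[OF _ A_basis] unfolding A by simp
  moreover have "asymptotic_basis Astar_set"
    using asymptotic_basis_if_nonneg[OF _ Astar_basis] unfolding Astar_set_def by simp
  ultimately show ?thesis
    using mu_AX_eq Astar_eq_diff Astar_order unfolding Astar A by simp
qed

end
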